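(* Let $g\colon[r]^d\to\{0,1\}$ be $k$-monotone and let $f=(-1)^{g}\colon[r]^d\to\{-1,1\}$. Then $\mathrm{Inf}[f]\leq k\sqrt{d}$.
   Context: $[r]^d$ is ordered coordinatewise; $g$ is $k$-monotone if there is no chain $x_1\preceq\cdots\preceq x_{k+1}$ with $g(x_1)=1$ and $g(x_i)\neq g(x_{i+1})$ for all $i\in[k]$. For $f\colon[r]^d\to\{-1,1\}$, $\mathrm{Inf}_i[f]=2\Pr[f(x)\neq f(x^{(i)})]$, where $x$ is uniform in $[r]^d$ and $x^{(i)}$ is obtained from $x$ by replacing $x_i$ with an independent uniform element of $[r]$; $\mathrm{Inf}[f]=\sum_{i=1}^d\mathrm{Inf}_i[f]$. *)

theory Defs
  imports "HOL-Library.FuncSet" Complex_Main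
begin

text \<open>The grid [r]^d: points are functions on coordinates {0..<d} (coordinate i+1 of
  the paper is index i here) with values in [r] = {1..r}, extensional (PiE).\<close>
definition grid :: "nat \<Rightarrow> nat \<Rightarrow> (nat \<Rightarrow> nat) set" where
  "grid r d = PiE {..<d} (\<lambda>_. {1..r})"

definition grid_le :: "nat \<Rightarrow> (nat \<Rightarrow> nat) \<Rightarrow> (nat \<Rightarrow> nat) \<Rightarrow> bool" where
  "grid_le d x y \<longleftrightarrow> (\<forall>i<d. x i \<le> y i)"

definition k_monotone :: "nat \<Rightarrow> nat \<Rightarrow> nat \<Rightarrow> ((nat \<Rightarrow> nat) \<Rightarrow> nat) \<Rightarrow> bool" where
  "k_monotone r d k g \<longleftrightarrow>
     \<not> (\<exists>c :: nat \<Rightarrow> (nat \<Rightarrow> nat).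
          (\<forall>i\<in>{1..k+1}. c i \<in> grid r d) \<and>
          (\<forall>i\<in>{1..k}. grid_le d (c i) (c (Suc i))) \<and>
          g (c 1) = 1 \<and>
          (\<forall>i\<in>{1..k}. g (c i) \<noteq> g (c (Suc i))))"

definition influence_i :: "nat \<Rightarrow> nat \<Rightarrow> ((nat \<Rightarrow> nat) \<Rightarrow> real) \<Rightarrow> nat \<Rightarrow> real" where
  "influence_i r d f i =
     2 * real (card {(x, a). x \<in> grid r d \<and> a \<in> {1..r} \<and> f x \<noteq> f (x(i := a))})
       / real (card (grid r d) * r)"

definition influence :: "nat \<Rightarrow> nat \<Rightarrow> ((nat \<Rightarrow> nat) \<Rightarrow> real) \<Rightarrow> real" where
  "influence r d f = (\<Sum>i<d. influence_i r d f i)"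

end

theory Submission
  imports Defs "HOL-Analysis.Convex"
begin

text \<open>Let \<open>B\<^sub>j\<close> be the set of points lying above an alternating chain of length \<open>j\<close> that starts
  with the value 1. The \<open>B\<^sub>j\<close> are nested upsets, and for \<open>k\<close>-monotone \<open>g\<close> the value \<open>g x\<close> is the
  parity of the number of \<open>B\<^sub>1, \<dots>, B\<^sub>k\<close> containing \<open>x\<close>; so the influence of \<open>(-1)\<^sup>g\<close> is at most
  the sum of the influences of the \<open>k\<close> indicators of the \<open>B\<^sub>j\<close>.

  For an upset \<open>B\<close>, resampling coordinate \<open>i\<close> changes membership at a rate given by the
  centred coordinate \<open>2 x\<^sub>i - r - 1\<close> of the points of \<open>B\<close>. Hence its total influence is
  \<open>4 E[T 1\<^sub>B] / r\<close>, where \<open>T\<close> is the sum of the centred coordinates, and this is at most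
  \<open>2 E|T| / r\<close> because \<open>T\<close> has mean zero. The law of \<open>T\<close> is symmetric and unimodal on its parity
  class, which gives the sharp estimate \<open>(E|T|)\<^sup>2 \<le> 3/4 E T\<^sup>2 + 1/4 \<le> r\<^sup>2 d / 4\<close>, i.e. \<open>Inf \<le> \<surd>d\<close>
  for each upset.\<close>

lemma finite_grid [simp]: "finite (grid r d)"
  by (simp add: grid_def finite_PiE)

lemma card_grid: "card (grid r d) = r ^ d"
  by (simp add: grid_def card_PiE)

lemma grid_coord: "x \<in> grid r d \<Longrightarrow> i < d \<Longrightarrow> x i \<in> {1..r}"
  unfolding grid_def by (auto simp: PiE_iff)

lemma fun_upd_in_grid: "x \<in> grid r d \<Longrightarrow> i < d \<Longrightarrow> a \<in> {1..r} \<Longrightarrow> x(i := a) \<in> grid r d"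
  unfolding grid_def by (auto simp: PiE_iff extensional_def)

lemma sum_grid_Suc:
  "(\<Sum>x\<in>grid r (Suc d). h x) = (\<Sum>a\<in>{1..r}. \<Sum>y\<in>grid r d. h (y(d := a)))"
proof -
  have grid_Suc: "grid r (Suc d) = (\<lambda>(a, y). y(d := a)) ` ({1..r} \<times> grid r d)"
    unfolding grid_def lessThan_Suc by (rule PiE_insert_eq)
  have inj: "inj_on (\<lambda>(a, y). y(d := a)) ({1..r} \<times> grid r d)"
    unfolding grid_def by (rule inj_combinator) simp
  show ?thesis
    unfolding grid_Suc sum.reindex[OF inj] sum.cartesian_product by (rule sum.cong) (auto simp: split_def)
qed

lemma grid_le_refl: "grid_le d x x"
  unfolding grid_le_def by simp

lemma grid_le_trans: "grid_le d x y \<Longrightarrow> grid_le d y z \<Longrightarrow> grid_le d x z"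
  unfolding grid_le_def using le_trans by blast

section \<open>The centred coordinate sum\<close>

definition centred :: "nat \<Rightarrow> nat \<Rightarrow> int" where
  "centred r a = 2 * int a - int r - 1"

definition centred_sum :: "nat \<Rightarrow> nat \<Rightarrow> (nat \<Rightarrow> nat) \<Rightarrow> int" where
  "centred_sum r d x = (\<Sum>i<d. centred r (x i))"

lemma centred_sum_fun_upd:
  "centred_sum r (Suc d) (y(d := a)) = centred_sum r d y + centred r a"
proof -
  have "(\<Sum>i<d. centred r ((y(d := a)) i)) = (\<Sum>i<d. centred r (y i))"
    by (rule sum.cong) auto
  then show ?thesis
    unfolding centred_sum_def by simp
qed

lemma abs_centred_le: "a \<in> {1..r} \<Longrightarrow> \<bar>centred r a\<bar> \<le> int r - 1"
  unfolding centred_def by auto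

lemma abs_centred_sum_le:
  assumes x: "x \<in> grid r d"
  shows "\<bar>centred_sum r d x\<bar> \<le> int d * (int r - 1)"
proof -
  have "\<bar>centred_sum r d x\<bar> \<le> (\<Sum>i<d. \<bar>centred r (x i)\<bar>)"
    unfolding centred_sum_def by (rule sum_abs)
  also have "\<dots> \<le> (\<Sum>i<d. int r - 1)"
    using x by (intro sum_mono abs_centred_le grid_coord) auto
  finally show ?thesis
    by simp
qed

lemma sum_centred: "(\<Sum>a\<in>{1..r}. real_of_int (centred r a)) = 0"
proof -
  have "(\<Sum>a\<in>{1..n}. 2 * real a) = real n * (real n + 1)" for n
    by (induction n) (auto simp: algebra_simps)
  then show ?thesis
    unfolding centred_def by (simp add: sum_subtractf algebra_simps)
qed

lemma sum_centred_squared: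
  "(\<Sum>a\<in>{1..r}. (real_of_int (centred r a))\<^sup>2) = real r * ((real r)\<^sup>2 - 1) / 3"
proof -
  have sum_sq: "(\<Sum>a\<in>{1..n}. (2 * real a - c)\<^sup>2)
      = 2 * real n * (real n + 1) * (2 * real n + 1) / 3 - 2 * c * real n * (real n + 1) + real n * c\<^sup>2"
    for n and c :: real
  proof (induction n)
    case (Suc n)
    have "(\<Sum>a\<in>{1..Suc n}. (2 * real a - c)\<^sup>2) = (\<Sum>a\<in>{1..n}. (2 * real a - c)\<^sup>2) + (2 * real (Suc n) - c)\<^sup>2"
      by simp
    also have "\<dots> = 2 * real (Suc n) * (real (Suc n) + 1) * (2 * real (Suc n) + 1) / 3
        - 2 * c * real (Suc n) * (real (Suc n) + 1) + real (Suc n) * c\<^sup>2"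
      unfolding Suc.IH by (simp add: power2_eq_square field_simps)
    finally show ?case .
  qed simp
  have "(\<Sum>a\<in>{1..r}. (real_of_int (centred r a))\<^sup>2) = (\<Sum>a\<in>{1..r}. (2 * real a - (real r + 1))\<^sup>2)"
    unfolding centred_def by (simp add: algebra_simps)
  then show ?thesis
    unfolding sum_sq by (simp add: power2_eq_square power3_eq_cube algebra_simps)
qed

lemma sum_grid_centred_sum: "(\<Sum>x\<in>grid r d. real_of_int (centred_sum r d x)) = 0"
proof (induction d)
  case 0
  then show ?case
    by (simp add: centred_sum_def)
next
  case (Suc d)
  have "(\<Sum>x\<in>grid r (Suc d). real_of_int (centred_sum r (Suc d) x))
      = (\<Sum>a\<in>{1..r}. \<Sum>y\<in>grid r d. real_of_int (centred_sum r d y) + real_of_int (centred r a))"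
    unfolding sum_grid_Suc by (simp add: centred_sum_fun_upd)
  also have "\<dots> = real (r ^ d) * (\<Sum>a\<in>{1..r}. real_of_int (centred r a))"
    using Suc by (simp add: sum.distrib card_grid sum_distrib_left)
  finally show ?case
    unfolding sum_centred by simp
qed

lemma sum_grid_centred_sum_squared:
  "(\<Sum>x\<in>grid r d. (real_of_int (centred_sum r d x))\<^sup>2) = real r ^ d * real d * ((real r)\<^sup>2 - 1) / 3"
proof (induction d)
  case 0
  then show ?case
    by (simp add: centred_sum_def)
next
  case (Suc d)
  let ?T = "\<lambda>y. real_of_int (centred_sum r d y)" and ?c = "\<lambda>a. real_of_int (centred r a)"
  have "(\<Sum>x\<in>grid r (Suc d). (real_of_int (centred_sum r (Suc d) x))\<^sup>2)
      = (\<Sum>a\<in>{1..r}. \<Sum>y\<in>grid r d. (?T y)\<^sup>2 + 2 * ?c a * ?T y + (?c a)\<^sup>2)"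
    unfolding sum_grid_Suc by (simp add: centred_sum_fun_upd power2_eq_square algebra_simps)
  also have "\<dots> = (\<Sum>a\<in>{1..r}. real r ^ d * real d * ((real r)\<^sup>2 - 1) / 3 + real r ^ d * (?c a)\<^sup>2)"
    using Suc by (simp add: sum.distrib card_grid flip: sum_distrib_left add: sum_grid_centred_sum)
  also have "\<dots> = real r * (real r ^ d * real d * ((real r)\<^sup>2 - 1) / 3)
      + real r ^ d * (\<Sum>a\<in>{1..r}. (?c a)\<^sup>2)"
    by (simp add: sum.distrib sum_distrib_left)
  also have "\<dots> = real r ^ Suc d * real (Suc d) * ((real r)\<^sup>2 - 1) / 3"
    unfolding sum_centred_squared by (simp only: power_Suc of_nat_Suc) (simp add: field_simps)
  finally show ?case .
qed

section \<open>Symmetric unimodal distributions on the integers\<close>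

text \<open>Monotonicity is only required along \<open>t, t + 2, t + 4, \<dots>\<close>, since all values of a centred sum
  have the same parity.\<close>
definition symmetric_unimodal :: "(int \<Rightarrow> real) \<Rightarrow> bool" where
  "symmetric_unimodal q \<longleftrightarrow> (\<forall>t. q (- t) = q t) \<and> (\<forall>t \<ge> -1. q (t + 2) \<le> q t)"

lemma symmetric_unimodal_le:
  assumes q: "symmetric_unimodal q" and uv: "\<bar>u\<bar> \<le> \<bar>v\<bar>" "even (v - u)"
  shows "q v \<le> q u"
proof -
  have q_abs: "q s = q \<bar>s\<bar>" for s
    using q unfolding symmetric_unimodal_def by (cases "s \<ge> 0") auto
  have descent: "q (int a + 2 * int k) \<le> q (int a)" for a k :: nat
  proof (induction k)
    case (Suc k)
    have "q (int a + 2 * int (Suc k)) = q ((int a + 2 * int k) + 2)"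
      by (simp add: algebra_simps)
    also have "\<dots> \<le> q (int a + 2 * int k)"
      using q unfolding symmetric_unimodal_def by simp
    finally show ?case
      using Suc by simp
  qed simp
  have "even (\<bar>v\<bar> - \<bar>u\<bar>)"
    using uv(2) by (cases "v \<ge> 0"; cases "u \<ge> 0") (auto simp: algebra_simps even_minus)
  then obtain k where k: "\<bar>v\<bar> - \<bar>u\<bar> = 2 * k"
    by (rule evenE)
  with uv(1) obtain k' :: nat where "k = int k'"
    using nonneg_int_cases[of k] by force
  with k have "\<bar>v\<bar> = \<bar>u\<bar> + 2 * int k'"
    by simp
  moreover obtain a :: nat where "\<bar>u\<bar> = int a"
    using abs_ge_zero nonneg_int_cases by metis
  ultimately show ?thesis
    using descent[of a k'] q_abs[of u] q_abs[of v] by simp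
qed

definition level_count :: "nat \<Rightarrow> nat \<Rightarrow> int \<Rightarrow> real" where
  "level_count r d t = real (card {x \<in> grid r d. centred_sum r d x = t})"

lemma sum_grid_by_level:
  assumes "finite S" "centred_sum r d ` grid r d \<subseteq> S"
  shows "(\<Sum>x\<in>grid r d. h (centred_sum r d x)) = (\<Sum>t\<in>S. level_count r d t * h t)"
proof -
  have "(\<Sum>t\<in>S. level_count r d t * h t)
      = (\<Sum>t\<in>S. \<Sum>x\<in>{x \<in> grid r d. centred_sum r d x = t}. h (centred_sum r d x))"
    unfolding level_count_def by (intro sum.cong refl) simp
  also have "\<dots> = (\<Sum>x\<in>grid r d. h (centred_sum r d x))"
    by (rule sum.group[OF _ assms]) simp
  finally show ?thesis
    by simp
qed

lemma level_count_0: "level_count r 0 t = (if t = 0 then 1 else 0)"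
  unfolding level_count_def grid_def centred_sum_def by simp

lemma level_count_Suc: "level_count r (Suc d) t = (\<Sum>a\<in>{1..r}. level_count r d (t - centred r a))"
proof -
  have "level_count r (Suc d) t = (\<Sum>x\<in>grid r (Suc d). if centred_sum r (Suc d) x = t then 1 else 0)"
    unfolding level_count_def by (simp add: sum.If_cases Int_def)
  also have "\<dots> = (\<Sum>a\<in>{1..r}. \<Sum>y\<in>grid r d. if centred_sum r d y = t - centred r a then 1 else 0)"
    unfolding sum_grid_Suc by (intro sum.cong refl) (auto simp: centred_sum_fun_upd)
  finally show ?thesis
    unfolding level_count_def by (simp add: sum.If_cases Int_def)
qed

lemma level_count_eq_0: "\<bar>t\<bar> > int d * (int r - 1) \<Longrightarrow> level_count r d t = 0"
  unfolding level_count_def using abs_centred_sum_le by fastforce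

lemma level_count_uminus: "level_count r d (- t) = level_count r d t"
proof (induction d arbitrary: t)
  case (Suc d)
  have "level_count r (Suc d) (- t) = (\<Sum>a\<in>{1..r}. level_count r d (t + centred r a))"
    unfolding level_count_Suc using Suc.IH[of "t + centred r _"]
    by (intro sum.cong refl) (simp add: algebra_simps)
  also have "\<dots> = (\<Sum>a\<in>{1..r}. level_count r d (t + centred r (r + 1 - a)))"
    by (rule sum.atLeastAtMost_rev)
  also have "\<dots> = (\<Sum>a\<in>{1..r}. level_count r d (t - centred r a))"
    by (intro sum.cong refl) (auto simp: centred_def of_nat_diff algebra_simps)
  finally show ?case
    by (simp add: level_count_Suc)
qed (simp add: level_count_0)

text \<open>Adding one uniform coordinate convolves with the uniform distribution on
  \<open>{1 - r, 3 - r, \<dots>, r - 1}\<close>; the difference of two adjacent values then telescopes to a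
  difference \<open>q (t - r + 1) - q (t + r + 1)\<close> of the old distribution.\<close>
lemma symmetric_unimodal_level_count: "symmetric_unimodal (level_count r d)"
proof (induction d)
  case 0
  show ?case
    unfolding symmetric_unimodal_def by (simp add: level_count_0)
next
  case (Suc d)
  have "level_count r (Suc d) (t + 2) \<le> level_count r (Suc d) t" if "t \<ge> -1" for t
  proof -
    define f where "f a = level_count r d (t - (2 * int a - int r - 1))" for a :: nat
    have "level_count r (Suc d) t - level_count r (Suc d) (t + 2) = (\<Sum>a\<in>{1..r}. f a - f (a - 1))"
      unfolding level_count_Suc f_def centred_def sum_subtractf[symmetric]
      by (intro sum.cong refl) (auto simp: algebra_simps of_nat_diff)
    also have "\<dots> = f r - f 0"
      by (induction r) auto
    also have "\<dots> \<ge> 0"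
      using symmetric_unimodal_le[OF Suc.IH, of "t - int r + 1" "t + int r + 1"] that
      unfolding f_def by (simp add: algebra_simps)
    finally show ?thesis
      by simp
  qed
  then show ?case
    unfolding symmetric_unimodal_def by (simp add: level_count_uminus)
qed

definition parity_interval :: "nat \<Rightarrow> int set" where
  "parity_interval m = {t. \<bar>t\<bar> \<le> int m \<and> even (int m - t)}"

lemma parity_interval_subset: "parity_interval m \<subseteq> {- int m..int m}"
  unfolding parity_interval_def by auto

lemma finite_parity_interval [simp]: "finite (parity_interval m)"
  using parity_interval_subset finite_subset by blast

lemma parity_interval_0: "parity_interval 0 = {0}"
  unfolding parity_interval_def by auto

lemma parity_interval_1: "parity_interval (Suc 0) = {-1, 1}"
  unfolding parity_interval_def by (auto; presburger)

lemma sum_parity_interval_add2: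
  "(\<Sum>t\<in>parity_interval (m + 2). h t) = (\<Sum>t\<in>parity_interval m. h t) + h (int m + 2) + h (- int m - 2)"
proof -
  have "parity_interval (m + 2) = insert (int m + 2) (insert (- int m - 2) (parity_interval m))"
    unfolding parity_interval_def by (auto simp: abs_if; presburger)
  moreover have "int m + 2 \<notin> insert (- int m - 2) (parity_interval m)" "- int m - 2 \<notin> parity_interval m"
    unfolding parity_interval_def by auto
  ultimately show ?thesis
    by (simp add: algebra_simps)
qed

lemma card_parity_interval: "card (parity_interval m) = m + 1"
proof (induction m rule: nat_induct2)
  case (step m)
  have "card (parity_interval (m + 2)) = (\<Sum>t\<in>parity_interval (m + 2). 1)"
    by simp
  also have "\<dots> = card (parity_interval m) + 2"
    unfolding sum_parity_interval_add2 by simp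
  finally show ?case
    using step by simp
qed (simp_all add: parity_interval_0 parity_interval_1)

lemma sum_parity_interval_abs: "(\<Sum>t\<in>parity_interval m. real_of_int \<bar>t\<bar>) \<le> (real m + 1)\<^sup>2 / 2"
proof (induction m rule: nat_induct2)
  case (step m)
  have "(\<Sum>t\<in>parity_interval (m + 2). real_of_int \<bar>t\<bar>)
      = (\<Sum>t\<in>parity_interval m. real_of_int \<bar>t\<bar>) + 2 * (real m + 2)"
    unfolding sum_parity_interval_add2 by simp
  also have "\<dots> \<le> (real (m + 2) + 1)\<^sup>2 / 2"
    using step by (simp add: power2_eq_square algebra_simps)
  finally show ?case .
qed (simp_all add: parity_interval_0 parity_interval_1)

lemma sum_parity_interval_moment:
  "(\<Sum>t\<in>parity_interval m. 3/4 * (real_of_int t)\<^sup>2 + 1/4) = (real m + 1) ^ 3 / 4"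
proof (induction m rule: nat_induct2)
  case (step m)
  have "(\<Sum>t\<in>parity_interval (m + 2). 3/4 * (real_of_int t)\<^sup>2 + 1/4)
      = (\<Sum>t\<in>parity_interval m. 3/4 * (real_of_int t)\<^sup>2 + 1/4) + 2 * (3/4 * (real m + 2)\<^sup>2 + 1/4)"
    unfolding sum_parity_interval_add2 by (simp add: power2_eq_square algebra_simps)
  also have "\<dots> = (real (m + 2) + 1) ^ 3 / 4"
    using step by (simp add: power2_eq_square power3_eq_cube algebra_simps)
  finally show ?case .
qed (simp_all add: parity_interval_0 parity_interval_1)

lemma symmetric_unimodal_decomposition:
  assumes q: "symmetric_unimodal q" and supp: "\<And>t. \<bar>t\<bar> > int N \<Longrightarrow> q t = 0"
  shows "q t = (\<Sum>m\<in>{0..N}. if t \<in> parity_interval m then q (int m) - q (int m + 2) else 0)"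
proof -
  define \<mu> where "\<mu> m = q (int m) - q (int m + 2)" for m :: nat
  have nat_case: "q (int s) = (\<Sum>m\<in>{0..N}. if int s \<in> parity_interval m then \<mu> m else 0)" for s
  proof (induction "N + 2 - s" arbitrary: s rule: less_induct)
    case less
    show ?case
    proof (cases "s \<le> N")
      case False
      then have "int s \<notin> parity_interval m" if "m \<in> {0..N}" for m
        using that unfolding parity_interval_def by auto
      then show ?thesis
        using supp[of "int s"] False by simp
    next
      case True
      have "(if int s \<in> parity_interval m then \<mu> m else 0)
          = (if m = s then \<mu> m else 0) + (if int (s + 2) \<in> parity_interval m then \<mu> m else 0)" for m
        unfolding parity_interval_def by (auto simp: algebra_simps; presburger)
      then have "(\<Sum>m\<in>{0..N}. if int s \<in> parity_interval m then \<mu> m else 0)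
          = \<mu> s + (\<Sum>m\<in>{0..N}. if int (s + 2) \<in> parity_interval m then \<mu> m else 0)"
        using True by (simp add: sum.distrib)
      also have "\<dots> = q (int s)"
        using less[of "s + 2"] True unfolding \<mu>_def by (simp add: add.commute)
      finally show ?thesis
        by simp
    qed
  qed
  have "q t = q \<bar>t\<bar>"
    using q unfolding symmetric_unimodal_def by (cases "t \<ge> 0") auto
  also have "\<dots> = (\<Sum>m\<in>{0..N}. if int (nat \<bar>t\<bar>) \<in> parity_interval m then \<mu> m else 0)"
    using nat_case[of "nat \<bar>t\<bar>"] by simp
  also have "\<dots> = (\<Sum>m\<in>{0..N}. if t \<in> parity_interval m then \<mu> m else 0)"
    unfolding parity_interval_def by (intro sum.cong refl) (cases "t \<ge> 0"; simp add: algebra_simps)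
  finally show ?thesis
    unfolding \<mu>_def .
qed

lemma sum_symmetric_unimodal:
  assumes q: "symmetric_unimodal q" and supp: "\<And>t. \<bar>t\<bar> > int N \<Longrightarrow> q t = 0"
  shows "(\<Sum>t\<in>{-int N..int N}. q t * h t)
    = (\<Sum>m\<in>{0..N}. (q (int m) - q (int m + 2)) * (\<Sum>t\<in>parity_interval m. h t))"
proof -
  let ?\<mu> = "\<lambda>m. q (int m) - q (int m + 2)"
  have "(\<Sum>t\<in>{-int N..int N}. q t * h t)
      = (\<Sum>t\<in>{-int N..int N}. \<Sum>m\<in>{0..N}. if t \<in> parity_interval m then ?\<mu> m * h t else 0)"
    by (subst symmetric_unimodal_decomposition[OF q supp]) (auto simp: sum_distrib_right intro!: sum.cong)
  also have "\<dots> = (\<Sum>m\<in>{0..N}. \<Sum>t\<in>{-int N..int N}. if t \<in> parity_interval m then ?\<mu> m * h t else 0)"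
    by (rule sum.swap)
  also have "\<dots> = (\<Sum>m\<in>{0..N}. \<Sum>t\<in>parity_interval m. ?\<mu> m * h t)"
  proof (rule sum.cong[OF refl])
    fix m assume "m \<in> {0..N}"
    then have "{-int N..int N} \<inter> parity_interval m = parity_interval m"
      using parity_interval_subset[of m] by auto
    then show "(\<Sum>t\<in>{-int N..int N}. if t \<in> parity_interval m then ?\<mu> m * h t else 0)
        = (\<Sum>t\<in>parity_interval m. ?\<mu> m * h t)"
      by (simp flip: sum.inter_restrict)
  qed
  finally show ?thesis
    by (simp add: sum_distrib_left)
qed

lemma weighted_Cauchy_Schwarz:
  fixes w x :: "'a \<Rightarrow> real"
  assumes "\<And>i. i \<in> A \<Longrightarrow> w i \<ge> 0"
  shows "(\<Sum>i\<in>A. w i * x i)\<^sup>2 \<le> (\<Sum>i\<in>A. w i) * (\<Sum>i\<in>A. w i * (x i)\<^sup>2)"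
proof -
  have "(\<Sum>i\<in>A. sqrt (w i) * (sqrt (w i) * x i))\<^sup>2
      \<le> (\<Sum>i\<in>A. (sqrt (w i))\<^sup>2) * (\<Sum>i\<in>A. (sqrt (w i) * x i)\<^sup>2)"
    by (rule Cauchy_Schwarz_ineq_sum)
  moreover have "sqrt (w i) * (sqrt (w i) * x i) = w i * x i" "(sqrt (w i))\<^sup>2 = w i"
      "(sqrt (w i) * x i)\<^sup>2 = w i * (x i)\<^sup>2" if "i \<in> A" for i
    using assms[OF that] by (simp_all add: power_mult_distrib mult.assoc[symmetric])
  ultimately show ?thesis
    by (simp cong: sum.cong)
qed

text \<open>The discrete form of \<open>(E|T|)\<^sup>2 \<le> 3/4 E T\<^sup>2\<close> for symmetric unimodal \<open>T\<close>: it holds with equality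
  for each uniform parity interval up to the \<open>1/4\<close>, and mixtures are handled by Cauchy-Schwarz.\<close>
lemma symmetric_unimodal_abs_moment:
  assumes q: "symmetric_unimodal q" and supp: "\<And>t. \<bar>t\<bar> > int N \<Longrightarrow> q t = 0"
  shows "(\<Sum>t\<in>{-int N..int N}. q t * \<bar>t\<bar>)\<^sup>2
    \<le> (\<Sum>t\<in>{-int N..int N}. q t) * (\<Sum>t\<in>{-int N..int N}. q t * (3/4 * (real_of_int t)\<^sup>2 + 1/4))"
proof -
  define w where "w m = (q (int m) - q (int m + 2)) * (real m + 1)" for m
  have w_nonneg: "w m \<ge> 0" for m
    using q unfolding w_def symmetric_unimodal_def by simp
  note mixture = sum_symmetric_unimodal[of q N, OF q supp]
  have abs_eq: "(\<Sum>t\<in>{-int N..int N}. q t * \<bar>t\<bar>)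
      = (\<Sum>m\<in>{0..N}. (q (int m) - q (int m + 2)) * (\<Sum>t\<in>parity_interval m. real_of_int \<bar>t\<bar>))"
    using mixture[of "\<lambda>t. real_of_int \<bar>t\<bar>"] by simp
  have abs_nonneg: "0 \<le> (\<Sum>t\<in>{-int N..int N}. q t * \<bar>t\<bar>)"
    using q unfolding abs_eq symmetric_unimodal_def by (intro sum_nonneg mult_nonneg_nonneg) auto
  have "(\<Sum>t\<in>{-int N..int N}. q t * \<bar>t\<bar>)
      \<le> (\<Sum>m\<in>{0..N}. (q (int m) - q (int m + 2)) * ((real m + 1)\<^sup>2 / 2))"
    using q unfolding abs_eq symmetric_unimodal_def
    by (intro sum_mono mult_left_mono sum_parity_interval_abs) simp
  also have "\<dots> = (\<Sum>m\<in>{0..N}. w m * (real m + 1)) / 2"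
    unfolding w_def sum_divide_distrib by (intro sum.cong refl) (simp add: power2_eq_square)
  finally have abs_le: "(\<Sum>t\<in>{-int N..int N}. q t * \<bar>t\<bar>) \<le> (\<Sum>m\<in>{0..N}. w m * (real m + 1)) / 2" .
  have mass: "(\<Sum>t\<in>{-int N..int N}. q t) = (\<Sum>m\<in>{0..N}. w m)"
    using mixture[of "\<lambda>_. 1"] by (simp add: card_parity_interval w_def add.commute)
  have "(\<Sum>t\<in>{-int N..int N}. q t * (3/4 * (real_of_int t)\<^sup>2 + 1/4))
      = (\<Sum>m\<in>{0..N}. (q (int m) - q (int m + 2)) * ((real m + 1) ^ 3 / 4))"
    using mixture[of "\<lambda>t. 3/4 * (real_of_int t)\<^sup>2 + 1/4"] by (simp only: sum_parity_interval_moment)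
  also have "\<dots> = (\<Sum>m\<in>{0..N}. w m * (real m + 1)\<^sup>2) / 4"
    unfolding w_def sum_divide_distrib by (intro sum.cong refl) (simp add: power2_eq_square power3_eq_cube)
  finally have moment: "(\<Sum>t\<in>{-int N..int N}. q t * (3/4 * (real_of_int t)\<^sup>2 + 1/4))
      = (\<Sum>m\<in>{0..N}. w m * (real m + 1)\<^sup>2) / 4" .
  have "(\<Sum>t\<in>{-int N..int N}. q t * \<bar>t\<bar>)\<^sup>2 \<le> ((\<Sum>m\<in>{0..N}. w m * (real m + 1)) / 2)\<^sup>2"
    using abs_le abs_nonneg by (rule power_mono)
  also have "\<dots> \<le> (\<Sum>m\<in>{0..N}. w m) * (\<Sum>m\<in>{0..N}. w m * (real m + 1)\<^sup>2) / 4"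
    using weighted_Cauchy_Schwarz[of "{0..N}" w "\<lambda>m. real m + 1"] w_nonneg by (simp add: power_divide)
  finally show ?thesis
    unfolding mass moment by simp
qed

lemma sum_grid_abs_centred_sum_le:
  "(\<Sum>x\<in>grid r d. real_of_int \<bar>centred_sum r d x\<bar>) \<le> real r ^ d * real r * sqrt (real d) / 2"
proof (cases "r \<ge> 1 \<and> d \<ge> 1")
  case False
  then consider "d = 0" | "r = 0" "d \<ge> 1"
    by linarith
  then show ?thesis
  proof cases
    case 1
    then show ?thesis
      by (simp add: centred_sum_def)
  next
    case 2
    then have "grid r d = {}"
      using grid_coord[of _ r d 0] by fastforce
    then show ?thesis
      by simp
  qed
next
  case True
  define N where "N = d * (r - 1)"
  have N: "int N = int d * (int r - 1)"
    unfolding N_def using True by (simp add: of_nat_diff)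
  have range: "centred_sum r d ` grid r d \<subseteq> {-int N..int N}"
    using abs_centred_sum_le unfolding N by (force simp: abs_le_iff)
  have supp: "\<bar>t\<bar> > int N \<Longrightarrow> level_count r d t = 0" for t
    using level_count_eq_0 N by simp
  have mass: "(\<Sum>t\<in>{-int N..int N}. level_count r d t) = real r ^ d"
    using sum_grid_by_level[OF _ range, of "\<lambda>t. 1"] by (simp add: card_grid)
  have "(\<Sum>t\<in>{-int N..int N}. level_count r d t * (3/4 * (real_of_int t)\<^sup>2 + 1/4))
      = (\<Sum>x\<in>grid r d. 3/4 * (real_of_int (centred_sum r d x))\<^sup>2 + 1/4)"
    using sum_grid_by_level[OF _ range, of "\<lambda>t. 3/4 * (real_of_int t)\<^sup>2 + 1/4"] by simp
  also have "\<dots> = 3/4 * (\<Sum>x\<in>grid r d. (real_of_int (centred_sum r d x))\<^sup>2) + real r ^ d / 4"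
    by (simp add: sum.distrib card_grid sum_distrib_left)
  also have "\<dots> = real r ^ d * (real d * ((real r)\<^sup>2 - 1) + 1) / 4"
    unfolding sum_grid_centred_sum_squared by (simp add: field_simps)
  finally have moment: "(\<Sum>t\<in>{-int N..int N}. level_count r d t * (3/4 * (real_of_int t)\<^sup>2 + 1/4))
      = real r ^ d * (real d * ((real r)\<^sup>2 - 1) + 1) / 4" .
  have "(\<Sum>x\<in>grid r d. real_of_int \<bar>centred_sum r d x\<bar>)\<^sup>2
      = (\<Sum>t\<in>{-int N..int N}. level_count r d t * \<bar>t\<bar>)\<^sup>2"
    using sum_grid_by_level[OF _ range, of "\<lambda>t. real_of_int \<bar>t\<bar>"] by simp
  also have "\<dots> \<le> real r ^ d * (real r ^ d * (real d * ((real r)\<^sup>2 - 1) + 1) / 4)"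
    using symmetric_unimodal_abs_moment[of _ N, OF symmetric_unimodal_level_count supp] unfolding mass moment .
  also have "\<dots> \<le> real r ^ d * (real r ^ d * (real d * (real r)\<^sup>2) / 4)"
    using True by (intro mult_left_mono divide_right_mono) (auto simp: algebra_simps)
  also have "\<dots> = (real r ^ d * real r * sqrt (real d) / 2)\<^sup>2"
    by (simp add: power2_eq_square power_mult_distrib algebra_simps)
  finally show ?thesis
    by (rule power2_le_imp_le) simp
qed

section \<open>Influence of upsets\<close>

definition upward_closed :: "nat \<Rightarrow> nat \<Rightarrow> ((nat \<Rightarrow> nat) \<Rightarrow> bool) \<Rightarrow> bool" where
  "upward_closed r d P \<longleftrightarrow> (\<forall>x \<in> grid r d. \<forall>y \<in> grid r d. P x \<longrightarrow> grid_le d x y \<longrightarrow> P y)"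

lemma upward_closed_fun_upd:
  assumes "upward_closed r d P" "x \<in> grid r d" "i < d" "a \<in> {1..r}" "P x" "x i \<le> a"
  shows "P (x(i := a))"
  using assms fun_upd_in_grid unfolding upward_closed_def grid_le_def by fastforce

lemma sum_grid_swap_coord:
  assumes "i < d"
  shows "(\<Sum>(x, a)\<in>grid r d \<times> {1..r}. h x a) = (\<Sum>(x, a)\<in>grid r d \<times> {1..r}. h (x(i := a)) (x i))"
proof -
  let ?\<sigma> = "\<lambda>(x, a). (x(i := a), x i)"
  have "bij_betw ?\<sigma> (grid r d \<times> {1..r}) (grid r d \<times> {1..r})"
    by (rule bij_betw_byWitness[where f' = ?\<sigma>])
      (auto simp: fun_upd_in_grid assms grid_coord[OF _ assms, simplified])
  from sum.reindex_bij_betw[OF this, of "\<lambda>(x, a). h x a"] show ?thesis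
    by (simp add: split_def)
qed

lemma sum_below_minus_above:
  assumes c: "c \<in> {1..r}"
  shows "(\<Sum>a\<in>{1..r}. of_bool (a < c) - of_bool (c < a)) = real_of_int (centred r c)"
proof -
  from c have "{1..r} \<inter> {a. a < c} = {1..<c}" "{1..r} \<inter> {a. c < a} = {c<..r}"
    by auto
  then show ?thesis
    using c by (simp add: sum_subtractf centred_def of_nat_diff)
qed

text \<open>Resampling coordinate \<open>i\<close> can only leave \<open>P\<close> by moving down; swapping the roles of
  \<open>x\<close> and \<open>x(i := a)\<close> matches the remaining moves down inside \<open>P\<close> with the moves up from \<open>P\<close>.\<close>
lemma card_flips_upward_closed:
  assumes P: "upward_closed r d P" and i: "i < d"
  shows "real (card {(x, a). x \<in> grid r d \<and> a \<in> {1..r} \<and> P x \<noteq> P (x(i := a))})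
    = 2 * (\<Sum>x\<in>{x \<in> grid r d. P x}. real_of_int (centred r (x i)))"
proof -
  let ?G = "grid r d" and ?R = "{1..r}"
  let ?sum = "\<lambda>h. \<Sum>(x, a)\<in>?G \<times> ?R. (h x a :: real)"
  let ?down = "\<lambda>x a. of_bool (P x \<and> \<not> P (x(i := a)))"
  have swap: "?sum h = ?sum (\<lambda>x a. h (x(i := a)) (x i))" for h
    using sum_grid_swap_coord[OF i] .
  have "real (card {(x, a). x \<in> ?G \<and> a \<in> ?R \<and> P x \<noteq> P (x(i := a))})
      = ?sum (\<lambda>x a. of_bool (P x \<noteq> P (x(i := a))))"
  proof -
    have "{(x, a). x \<in> ?G \<and> a \<in> ?R \<and> P x \<noteq> P (x(i := a))}
        = (?G \<times> ?R) \<inter> {p. P (fst p) \<noteq> P ((fst p)(i := snd p))}"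
      by auto
    then show ?thesis
      by (simp add: case_prod_unfold)
  qed
  also have "\<dots> = ?sum ?down + ?sum (\<lambda>x a. of_bool (\<not> P x \<and> P (x(i := a))))"
    by (subst sum.distrib[symmetric]) (rule sum.cong; auto)
  also have "?sum (\<lambda>x a. of_bool (\<not> P x \<and> P (x(i := a)))) = ?sum ?down"
    by (subst swap) (intro sum.cong refl; auto)
  also have "?sum ?down = ?sum (\<lambda>x a. of_bool (P x \<and> a < x i)) - ?sum (\<lambda>x a. of_bool (P x \<and> P (x(i := a)) \<and> a < x i))"
    using upward_closed_fun_upd[OF P _ i] by (subst sum_subtractf[symmetric]) (rule sum.cong; force)
  also have "?sum (\<lambda>x a. of_bool (P x \<and> P (x(i := a)) \<and> a < x i)) = ?sum (\<lambda>x a. of_bool (P x \<and> x i < a))"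
    using upward_closed_fun_upd[OF P _ i] by (subst swap) (intro sum.cong; force)
  also have "?sum (\<lambda>x a. of_bool (P x \<and> a < x i)) - ?sum (\<lambda>x a. of_bool (P x \<and> x i < a))
      = ?sum (\<lambda>x a. of_bool (P x) * (of_bool (a < x i) - of_bool (x i < a)))"
    by (subst sum_subtractf[symmetric]) (rule sum.cong; auto)
  also have "\<dots> = (\<Sum>x\<in>?G. of_bool (P x) * (\<Sum>a\<in>?R. of_bool (a < x i) - of_bool (x i < a)))"
    unfolding sum_distrib_left sum.cartesian_product ..
  also have "\<dots> = (\<Sum>x\<in>?G. of_bool (P x) * real_of_int (centred r (x i)))"
    by (intro sum.cong refl) (simp only: sum_below_minus_above[OF grid_coord[OF _ i]])
  also have "\<dots> = (\<Sum>x\<in>{x \<in> ?G. P x}. real_of_int (centred r (x i)))"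
    by (simp add: Int_def)
  finally show ?thesis
    by linarith
qed

text \<open>Since the centred sum has mean zero, its positive part carries half of its absolute mass.\<close>
lemma sum_centred_sum_subset_le:
  assumes "B \<subseteq> grid r d"
  shows "(\<Sum>x\<in>B. real_of_int (centred_sum r d x)) \<le> (\<Sum>x\<in>grid r d. real_of_int \<bar>centred_sum r d x\<bar>) / 2"
proof -
  let ?T = "\<lambda>x. real_of_int (centred_sum r d x)"
  have "(\<Sum>x\<in>B. ?T x) \<le> (\<Sum>x\<in>B. max (?T x) 0)"
    by (intro sum_mono) simp
  also have "\<dots> \<le> (\<Sum>x\<in>grid r d. max (?T x) 0)"
    using assms by (intro sum_mono2) auto
  also have "\<dots> = ((\<Sum>x\<in>grid r d. \<bar>?T x\<bar>) + (\<Sum>x\<in>grid r d. ?T x)) / 2"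
    by (simp add: sum.distrib[symmetric] sum_divide_distrib) (intro sum.cong refl; simp add: max_def)
  finally show ?thesis
    by (simp add: sum_grid_centred_sum)
qed

lemma influence_upward_closed_le:
  assumes P: "upward_closed r d P"
  shows "influence r d (\<lambda>x. of_bool (P x)) \<le> sqrt (real d)"
proof -
  let ?G = "grid r d"
  define D where "D = real r ^ d * real r"
  have flips: "real (card {(x, a). x \<in> ?G \<and> a \<in> {1..r} \<and> (of_bool (P x) :: real) \<noteq> of_bool (P (x(i := a)))})
      = 2 * (\<Sum>x\<in>{x \<in> ?G. P x}. real_of_int (centred r (x i)))" if "i < d" for i
    using card_flips_upward_closed[OF P that] by (simp only: of_bool_eq_iff)
  have "influence r d (\<lambda>x. of_bool (P x))
      = (\<Sum>i<d. 4 * (\<Sum>x\<in>{x \<in> ?G. P x}. real_of_int (centred r (x i))) / D)"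
    unfolding influence_def influence_i_def
    by (intro sum.cong refl) (simp only: flips lessThan_iff, simp add: card_grid D_def)
  also have "\<dots> = 4 * (\<Sum>x\<in>{x \<in> ?G. P x}. real_of_int (centred_sum r d x)) / D"
    unfolding centred_sum_def by (simp add: sum_divide_distrib sum_distrib_left sum.swap[of _ "{..<d}"])
  also have "\<dots> \<le> 2 * (\<Sum>x\<in>?G. real_of_int \<bar>centred_sum r d x\<bar>) / D"
    using sum_centred_sum_subset_le[of "{x \<in> ?G. P x}" r d] unfolding D_def
    by (intro divide_right_mono) auto
  also have "\<dots> \<le> sqrt (real d)"
    using sum_grid_abs_centred_sum_le[of r d] unfolding D_def
    by (cases "r = 0") (auto simp: field_simps)
  finally show ?thesis .
qed

lemma influence_i_le_sum:
  assumes J: "finite J" and i: "i < d"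
    and determined: "\<And>x y. x \<in> grid r d \<Longrightarrow> y \<in> grid r d \<Longrightarrow> (\<forall>j\<in>J. h j x = h j y) \<Longrightarrow> f x = f y"
  shows "influence_i r d f i \<le> (\<Sum>j\<in>J. influence_i r d (h j) i)"
proof -
  let ?flips = "\<lambda>f. {(x, a). x \<in> grid r d \<and> a \<in> {1..r} \<and> f x \<noteq> f (x(i := a))}"
  have finite_flips: "finite (?flips f')" for f' :: "(nat \<Rightarrow> nat) \<Rightarrow> real"
    by (rule finite_subset[of _ "grid r d \<times> {1..r}"]) auto
  have "?flips f \<subseteq> (\<Union>j\<in>J. ?flips (h j))"
  proof
    fix p
    assume "p \<in> ?flips f"
    then obtain x a where p: "p = (x, a)" and x: "x \<in> grid r d" and a: "a \<in> {1..r}"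
      and flip: "f x \<noteq> f (x(i := a))"
      by blast
    obtain j where "j \<in> J" "h j x \<noteq> h j (x(i := a))"
      using determined[OF x fun_upd_in_grid[OF x i a]] flip by blast
    with p x a show "p \<in> (\<Union>j\<in>J. ?flips (h j))"
      by auto
  qed
  then have "card (?flips f) \<le> card (\<Union>j\<in>J. ?flips (h j))"
    using J finite_flips by (intro card_mono finite_UN_I) simp_all
  also have "\<dots> \<le> (\<Sum>j\<in>J. card (?flips (h j)))"
    by (rule card_UN_le[OF J])
  finally have "real (card (?flips f)) \<le> (\<Sum>j\<in>J. real (card (?flips (h j))))"
    by (simp flip: of_nat_sum)
  then show ?thesis
    unfolding influence_i_def sum_divide_distrib[symmetric] sum_distrib_left[symmetric]
    by (intro divide_right_mono mult_left_mono) (assumption | simp)+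
qed

lemma influence_le_sum:
  assumes "finite J"
    and "\<And>x y. x \<in> grid r d \<Longrightarrow> y \<in> grid r d \<Longrightarrow> (\<forall>j\<in>J. h j x = h j y) \<Longrightarrow> f x = f y"
  shows "influence r d f \<le> (\<Sum>j\<in>J. influence r d (h j))"
proof -
  have "influence r d f \<le> (\<Sum>i<d. \<Sum>j\<in>J. influence_i r d (h j) i)"
    unfolding influence_def using influence_i_le_sum[OF assms(1) _ assms(2)] by (intro sum_mono) simp
  then show ?thesis
    unfolding influence_def by (simp add: sum.swap[of _ J])
qed

section \<open>Alternating chains\<close>

definition alternating_chain :: "nat \<Rightarrow> nat \<Rightarrow> ((nat \<Rightarrow> nat) \<Rightarrow> nat) \<Rightarrow> nat \<Rightarrow> (nat \<Rightarrow> nat \<Rightarrow> nat) \<Rightarrow> bool"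
  where "alternating_chain r d g j c \<longleftrightarrow>
    (\<forall>i\<in>{1..j}. c i \<in> grid r d) \<and> (\<forall>i\<in>{1..<j}. grid_le d (c i) (c (Suc i))) \<and>
    g (c 1) = 1 \<and> (\<forall>i\<in>{1..<j}. g (c i) \<noteq> g (c (Suc i)))"

definition above_alternating_chain ::
    "nat \<Rightarrow> nat \<Rightarrow> ((nat \<Rightarrow> nat) \<Rightarrow> nat) \<Rightarrow> nat \<Rightarrow> (nat \<Rightarrow> nat) \<Rightarrow> bool"
  where "above_alternating_chain r d g j x \<longleftrightarrow> (\<exists>c. alternating_chain r d g j c \<and> grid_le d (c j) x)"

lemma k_monotone_iff_no_alternating_chain:
  "k_monotone r d k g \<longleftrightarrow> \<not> (\<exists>c. alternating_chain r d g (Suc k) c)"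
  unfolding k_monotone_def alternating_chain_def atLeastLessThanSuc_atLeastAtMost by simp

lemma k_monotone_not_above_alternating_chain:
  "k_monotone r d k g \<Longrightarrow> \<not> above_alternating_chain r d g (Suc k) x"
  unfolding k_monotone_iff_no_alternating_chain above_alternating_chain_def by blast

lemma upward_closed_above_alternating_chain: "upward_closed r d (above_alternating_chain r d g j)"
  unfolding upward_closed_def above_alternating_chain_def using grid_le_trans by blast

lemma above_alternating_chain_le:
  assumes "above_alternating_chain r d g j x" "1 \<le> j'" "j' \<le> j"
  shows "above_alternating_chain r d g j' x"
  using assms
proof (induction j)
  case (Suc j)
  show ?case
  proof (cases "j' = Suc j")
    case False
    from Suc.prems(1) obtain c where c: "alternating_chain r d g (Suc j) c" "grid_le d (c (Suc j)) x"
      unfolding above_alternating_chain_def by blast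
    with False Suc.prems(2,3) have "alternating_chain r d g j c" "grid_le d (c j) x"
      unfolding alternating_chain_def by (auto intro: grid_le_trans)
    with False Suc.prems(2,3) show ?thesis
      by (intro Suc.IH) (auto simp: above_alternating_chain_def)
  qed (use Suc.prems in simp)
qed simp

lemma alternating_chain_value:
  assumes g01: "\<forall>x\<in>grid r d. g x \<in> {0, 1}" and c: "alternating_chain r d g j c" and i: "i \<in> {1..j}"
  shows "g (c i) = (if odd i then 1 else 0)"
  using i
proof (induction i)
  case (Suc i)
  show ?case
  proof (cases "i = 0")
    case False
    with Suc.prems have "i \<in> {1..<j}" "Suc i \<in> {1..j}"
      by auto
    with c have "g (c i) \<noteq> g (c (Suc i))" "c (Suc i) \<in> grid r d"
      unfolding alternating_chain_def by blast+
    with g01 False Suc.IH Suc.prems show ?thesis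
      by fastforce
  qed (use c in \<open>simp add: alternating_chain_def\<close>)
qed simp

text \<open>The value at the top of a maximal alternating chain below \<open>x\<close> propagates to \<open>x\<close>:
  otherwise \<open>x\<close> would extend the chain.\<close>
lemma value_top_alternating_chain:
  assumes g01: "\<forall>x\<in>grid r d. g x \<in> {0, 1}" and x: "x \<in> grid r d" and j: "1 \<le> j"
    and above: "above_alternating_chain r d g j x" and not_above: "\<not> above_alternating_chain r d g (Suc j) x"
  shows "g x = (if odd j then 1 else 0)"
proof -
  obtain c where c: "alternating_chain r d g j c" "grid_le d (c j) x"
    using above unfolding above_alternating_chain_def by blast
  have "g x = g (c j)"
  proof (rule ccontr)
    assume "g x \<noteq> g (c j)"
    with c x j have "alternating_chain r d g (Suc j) (c(Suc j := x))"
      unfolding alternating_chain_def by (auto simp: less_Suc_eq_le le_Suc_eq)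
    then show False
      using not_above grid_le_refl unfolding above_alternating_chain_def by fastforce
  qed
  with alternating_chain_value[OF g01 c(1)] j show ?thesis
    by simp
qed

lemma value_not_above_alternating_chain:
  assumes g01: "\<forall>x\<in>grid r d. g x \<in> {0, 1}" and x: "x \<in> grid r d"
    and not_above: "\<not> above_alternating_chain r d g 1 x"
  shows "g x = 0"
proof -
  have "g x \<noteq> 1"
  proof
    assume "g x = 1"
    with x have "alternating_chain r d g 1 (\<lambda>_. x)"
      unfolding alternating_chain_def by simp
    then show False
      using not_above grid_le_refl unfolding above_alternating_chain_def by blast
  qed
  with g01 x show ?thesis
    by auto
qed

lemma initial_segment_eq_atLeastAtMost_card:
  fixes S :: "nat set"
  assumes "finite S" "0 \<notin> S" and down: "\<And>j j'. j \<in> S \<Longrightarrow> 1 \<le> j' \<Longrightarrow> j' \<le> j \<Longrightarrow> j' \<in> S"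
  shows "S = {1..card S}"
proof (cases "S = {}")
  case False
  have "S = {1..Max S}"
  proof
    show "S \<subseteq> {1..Max S}"
      using assms(1,2) Max_ge[OF assms(1)] by (auto simp: Suc_le_eq intro: Nat.gr0I)
    show "{1..Max S} \<subseteq> S"
      using down Max_in[OF assms(1) False] by auto
  qed
  moreover have "card {1..Max S} = Max S"
    by simp
  ultimately show ?thesis
    by simp
qed simp

lemma k_monotone_eq_parity:
  assumes g01: "\<forall>x\<in>grid r d. g x \<in> {0, 1}" and g: "k_monotone r d k g" and x: "x \<in> grid r d"
  shows "g x = (if odd (card {j \<in> {1..k}. above_alternating_chain r d g j x}) then 1 else 0)"
proof -
  define S where "S = {j \<in> {1..k}. above_alternating_chain r d g j x}"
  define M where "M = card S"
  have S: "S = {1..M}"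
    unfolding M_def using above_alternating_chain_le
    by (intro initial_segment_eq_atLeastAtMost_card) (auto simp: S_def)
  have "M \<le> card {1..k}"
    unfolding M_def S_def by (rule card_mono) auto
  then have "M \<le> k"
    by simp
  have not_above: "\<not> above_alternating_chain r d g (Suc M) x"
  proof (cases "Suc M \<le> k")
    case True
    moreover have "Suc M \<notin> S"
      using S by simp
    ultimately show ?thesis
      unfolding S_def by simp
  next
    case False
    with \<open>M \<le> k\<close> have "M = k"
      by simp
    then show ?thesis
      using k_monotone_not_above_alternating_chain[OF g] by simp
  qed
  show ?thesis
  proof (cases "M = 0")
    case True
    with not_above show ?thesis
      unfolding S_def[symmetric] M_def[symmetric] using value_not_above_alternating_chain[OF g01 x] by simp
  next
    case False
    then have "M \<in> S"
      using S by simp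
    then have "above_alternating_chain r d g M x"
      unfolding S_def by simp
    with False show ?thesis
      unfolding S_def[symmetric] M_def[symmetric]
      using value_top_alternating_chain[OF g01 x _ _ not_above] by simp
  qed
qed

theorem lemma6p6:
  fixes r d k :: nat and g :: "(nat \<Rightarrow> nat) \<Rightarrow> nat"
  assumes "\<forall>x\<in>grid r d. g x \<in> {0, 1}"
    and "k_monotone r d k g"
  shows "influence r d (\<lambda>x. (-1) ^ g x) \<le> real k * sqrt (real d)"
proof -
  let ?layer = "\<lambda>j x. of_bool (above_alternating_chain r d g j x) :: real"
  have "influence r d (\<lambda>x. (-1) ^ g x) \<le> (\<Sum>j\<in>{1..k}. influence r d (?layer j))"
  proof (rule influence_le_sum)
    fix x y
    assume x: "x \<in> grid r d" and y: "y \<in> grid r d" and "\<forall>j\<in>{1..k}. ?layer j x = ?layer j y"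
    then have "{j \<in> {1..k}. above_alternating_chain r d g j x} = {j \<in> {1..k}. above_alternating_chain r d g j y}"
      by (auto simp: of_bool_eq_iff)
    then show "(-1) ^ g x = (-1) ^ g y"
      using k_monotone_eq_parity[OF assms x] k_monotone_eq_parity[OF assms y] by simp
  qed simp
  also have "\<dots> \<le> (\<Sum>j\<in>{1..k}. sqrt (real d))"
    by (intro sum_mono influence_upward_closed_le upward_closed_above_alternating_chain)
  finally show ?thesis
    by simp
qed

end
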